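(* Let $G$ be a graph and $S,T\subseteq V(G)$. Let $X=\partial(S)\cup(T\cap S)$ and let $H$ be a graph with $X\subseteq V(H)$ and $V(H)\cap(V(G)\setminus S)=\emptyset$ such that $B_H(X)=B_{G[S]}(X)$. Let $G'$ be the graph obtained from $G$ by replacing $G[S]$ with $H$ (that is, $V(G')=(V(G)\setminus S)\cup V(H)$ and $E(G')$ consists of the edges of $G$ not having both endpoints in $S$ together with $E(H)$). Then $B_G(T)=B_{G'}(T)$.
   Context: $\partial(S)$ is the set of vertices of $S$ having at least one neighbor in $V(G)\setminus S$. For a graph $Y$ and $Z\subseteq V(Y)$, $B_Y(Z)$ is the set of subsets $Z'\subseteq Z$ such that there is a bipartition of $Y$ (proper $2$-coloring) with all of $Z'$ in one part and all of $Z\setminus Z'$ in the other; $B_Y(Z)=\emptyset$ if $Y$ is not bipartite. *)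

theory Defs
  imports Main
begin

definition graph :: "'a set \<Rightarrow> 'a set set \<Rightarrow> bool" where
  "graph V E \<longleftrightarrow> finite V \<and> (\<forall>e\<in>E. \<exists>u v. e = {u, v} \<and> u \<noteq> v \<and> u \<in> V \<and> v \<in> V)"

definition boundary :: "'a set \<Rightarrow> 'a set set \<Rightarrow> 'a set \<Rightarrow> 'a set" where
  "boundary V E S = {v \<in> S. \<exists>u \<in> V - S. {u, v} \<in> E}"

definition induced_edges :: "'a set set \<Rightarrow> 'a set \<Rightarrow> 'a set set" where
  "induced_edges E S = {e \<in> E. e \<subseteq> S}"

definition is_bipartition :: "'a set \<Rightarrow> 'a set set \<Rightarrow> 'a set \<Rightarrow> bool" where
  "is_bipartition V E A \<longleftrightarrow> A \<subseteq> V \<and> (\<forall>u v. {u, v} \<in> E \<longrightarrow> (u \<in> A \<longleftrightarrow> v \<notin> A))"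

definition Bsets :: "'a set \<Rightarrow> 'a set set \<Rightarrow> 'a set \<Rightarrow> 'a set set" where
  "Bsets V E Z = {Z'. Z' \<subseteq> Z \<and> (\<exists>A. is_bipartition V E A \<and>
      ((Z' \<subseteq> A \<and> Z - Z' \<subseteq> V - A) \<or> (Z' \<subseteq> V - A \<and> Z - Z' \<subseteq> A)))}"

end

theory Submission
  imports Defs
begin

text \<open>Write \<open>G\<close> as an outer part glued to the inner graph \<open>G[S]\<close> along \<open>X\<close>: since every
edge leaving \<open>S\<close> ends in \<open>\<partial>(S) \<subseteq> X\<close>, outer edges only see vertices outside \<open>S\<close> or in \<open>X\<close>.
Hence, given a bipartition of one glued graph, we may discard its inner part and splice in
any bipartition of the other inner graph that agrees with it on \<open>X\<close>; such a bipartition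
exists because \<open>B_H(X) = B_{G[S]}(X)\<close>. The splice does not change the colouring outside
\<open>S\<close> or on \<open>X\<close>, and \<open>T\<close> lies there, so the traces on \<open>T\<close> are the same.\<close>

lemma graph_edge_subset: "graph V E \<Longrightarrow> e \<in> E \<Longrightarrow> e \<subseteq> V"
  unfolding graph_def by auto

lemma boundary_subset: "boundary V E S \<subseteq> S"
  unfolding boundary_def by auto

lemma graph_edge_leaving_subset:
  assumes "graph V E" and "e \<in> E" and "\<not> e \<subseteq> S"
  shows "e \<subseteq> (V - S) \<union> boundary V E S"
proof -
  obtain u v where e: "e = {u, v}" and "u \<in> V" "v \<in> V"
    using assms(1,2) unfolding graph_def by blast
  moreover have "{v, u} \<in> E" using assms(2) e by (simp add: insert_commute)
  ultimately show ?thesis using assms(2,3) unfolding boundary_def by auto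
qed

lemma is_bipartition_restrict:
  assumes "is_bipartition V E A" and "F \<subseteq> E" and "\<forall>e\<in>F. e \<subseteq> W"
  shows "is_bipartition W F (A \<inter> W)"
  using assms unfolding is_bipartition_def by blast

lemma is_bipartition_complement:
  assumes "is_bipartition V E A" and "\<forall>e\<in>E. e \<subseteq> V"
  shows "is_bipartition V E (V - A)"
  using assms unfolding is_bipartition_def by blast

lemma Bsets_eq_image:
  assumes "Z \<subseteq> V" and "\<forall>e\<in>E. e \<subseteq> V"
  shows "Bsets V E Z = (\<lambda>A. A \<inter> Z) ` Collect (is_bipartition V E)"
proof (intro equalityI subsetI)
  fix Z' assume "Z' \<in> Bsets V E Z"
  then obtain A where Z': "Z' \<subseteq> Z" and A: "is_bipartition V E A"
    and "(Z' \<subseteq> A \<and> Z - Z' \<subseteq> V - A) \<or> (Z' \<subseteq> V - A \<and> Z - Z' \<subseteq> A)"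
    unfolding Bsets_def by blast
  then consider "Z' = A \<inter> Z" | "Z' = (V - A) \<inter> Z"
    using assms(1) by blast
  then show "Z' \<in> (\<lambda>A. A \<inter> Z) ` Collect (is_bipartition V E)"
    using A is_bipartition_complement[OF A assms(2)] by cases auto
next
  fix Z' assume "Z' \<in> (\<lambda>A. A \<inter> Z) ` Collect (is_bipartition V E)"
  then show "Z' \<in> Bsets V E Z"
    using assms(1) unfolding Bsets_def by blast
qed

lemma is_bipartition_splice:
  assumes A: "is_bipartition (U \<union> W) (E \<union> F) A"
    and B: "is_bipartition W' F' B"
    and BA: "B \<inter> X = A \<inter> X"
    and "U \<inter> W = {}" and "U \<inter> W' = {}"
    and E: "\<forall>e\<in>E. e \<subseteq> U \<union> X" and F': "\<forall>e\<in>F'. e \<subseteq> W'"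
  shows "is_bipartition (U \<union> W') (E \<union> F') ((A - W) \<union> B)"
    and "((A - W) \<union> B) \<inter> (U \<union> X) = A \<inter> (U \<union> X)"
proof -
  have "A \<subseteq> U \<union> W" and "B \<subseteq> W'"
    using A B unfolding is_bipartition_def by auto
  then show outer: "((A - W) \<union> B) \<inter> (U \<union> X) = A \<inter> (U \<union> X)"
    using BA assms(4,5) by blast
  have inner: "((A - W) \<union> B) \<inter> W' = B"
    using \<open>A \<subseteq> U \<union> W\<close> \<open>B \<subseteq> W'\<close> assms(5) by blast
  show "is_bipartition (U \<union> W') (E \<union> F') ((A - W) \<union> B)"
    unfolding is_bipartition_def
  proof (intro conjI allI impI)
    show "A - W \<union> B \<subseteq> U \<union> W'"
      using \<open>A \<subseteq> U \<union> W\<close> \<open>B \<subseteq> W'\<close> by blast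
  next
    fix u v assume "{u, v} \<in> E \<union> F'"
    then consider "{u, v} \<in> E" | "{u, v} \<in> F'" by blast
    then show "u \<in> A - W \<union> B \<longleftrightarrow> v \<notin> A - W \<union> B"
    proof cases
      case 1
      then have "u \<in> A \<longleftrightarrow> v \<notin> A"
        using A unfolding is_bipartition_def by blast
      moreover have "u \<in> U \<union> X" "v \<in> U \<union> X" using 1 E by blast+
      ultimately show ?thesis using outer by blast
    next
      case 2
      then have "u \<in> B \<longleftrightarrow> v \<notin> B"
        using B unfolding is_bipartition_def by blast
      moreover have "u \<in> W'" "v \<in> W'" using 2 F' by blast+
      ultimately show ?thesis using inner by blast
    qed
  qed
qed

lemma Bsets_replace_subgraph_subset:
  assumes "Bsets W F X \<subseteq> Bsets W' F' X"
    and "X \<subseteq> W" and "X \<subseteq> W'" and "U \<inter> W = {}" and "U \<inter> W' = {}"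
    and E: "\<forall>e\<in>E. e \<subseteq> U \<union> X" and F: "\<forall>e\<in>F. e \<subseteq> W" and F': "\<forall>e\<in>F'. e \<subseteq> W'"
    and T: "T \<subseteq> U \<union> X"
  shows "Bsets (U \<union> W) (E \<union> F) T \<subseteq> Bsets (U \<union> W') (E \<union> F') T"
proof -
  have image: "Bsets (U \<union> W) (E \<union> F) T = (\<lambda>A. A \<inter> T) ` Collect (is_bipartition (U \<union> W) (E \<union> F))"
    by (rule Bsets_eq_image) (use T E F \<open>X \<subseteq> W\<close> in blast)+
  have image': "Bsets (U \<union> W') (E \<union> F') T = (\<lambda>A. A \<inter> T) ` Collect (is_bipartition (U \<union> W') (E \<union> F'))"
    by (rule Bsets_eq_image) (use T E F' \<open>X \<subseteq> W'\<close> in blast)+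
  have trace: "A \<inter> T \<in> (\<lambda>A. A \<inter> T) ` Collect (is_bipartition (U \<union> W') (E \<union> F'))"
    if A: "is_bipartition (U \<union> W) (E \<union> F) A" for A
  proof -
    have "is_bipartition W F (A \<inter> W)"
      by (rule is_bipartition_restrict[OF A _ F]) blast
    moreover have "A \<inter> X = (A \<inter> W) \<inter> X"
      using \<open>X \<subseteq> W\<close> by blast
    ultimately have "A \<inter> X \<in> Bsets W F X"
      unfolding Bsets_eq_image[OF \<open>X \<subseteq> W\<close> F] by blast
    with assms(1) obtain B where B: "is_bipartition W' F' B" and BA: "B \<inter> X = A \<inter> X"
      unfolding Bsets_eq_image[OF \<open>X \<subseteq> W'\<close> F'] by blast
    note splice = is_bipartition_splice[OF A B BA assms(4,5) E F']
    from splice(2) have "((A - W) \<union> B) \<inter> T = A \<inter> T"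
      using T by blast
    with splice(1) show ?thesis by (metis image_eqI mem_Collect_eq)
  qed
  show ?thesis
    unfolding image image' by (rule image_subsetI) (simp add: trace)
qed

lemma Bsets_replace_subgraph:
  assumes "Bsets W F X = Bsets W' F' X"
    and "X \<subseteq> W" and "X \<subseteq> W'" and "U \<inter> W = {}" and "U \<inter> W' = {}"
    and "\<forall>e\<in>E. e \<subseteq> U \<union> X" and "\<forall>e\<in>F. e \<subseteq> W" and "\<forall>e\<in>F'. e \<subseteq> W'"
    and "T \<subseteq> U \<union> X"
  shows "Bsets (U \<union> W) (E \<union> F) T = Bsets (U \<union> W') (E \<union> F') T"
proof (rule equalityI)
  show "Bsets (U \<union> W) (E \<union> F) T \<subseteq> Bsets (U \<union> W') (E \<union> F') T"
    by (rule Bsets_replace_subgraph_subset[OF _ assms(2-9)]) (simp add: assms(1))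
  show "Bsets (U \<union> W') (E \<union> F') T \<subseteq> Bsets (U \<union> W) (E \<union> F) T"
    by (rule Bsets_replace_subgraph_subset[OF _ assms(3,2,5,4,6,8,7,9)]) (simp add: assms(1))
qed

theorem lemma5p6:
  fixes V VH :: "'a set" and E EH :: "'a set set" and S T X :: "'a set"
  assumes "graph V E"
    and "S \<subseteq> V" and "T \<subseteq> V"
    and "X = boundary V E S \<union> (T \<inter> S)"
    and "graph VH EH"
    and "X \<subseteq> VH"
    and "VH \<inter> (V - S) = {}"
    and "Bsets VH EH X = Bsets S (induced_edges E S) X"
  shows "Bsets V E T = Bsets ((V - S) \<union> VH) ({e \<in> E. \<not> e \<subseteq> S} \<union> EH) T"
proof -
  let ?Eout = "{e \<in> E. \<not> e \<subseteq> S}"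
  have decomp: "(V - S) \<union> S = V" "?Eout \<union> induced_edges E S = E"
    using assms(2) unfolding induced_edges_def by auto
  have "X \<subseteq> S"
    using assms(4) boundary_subset[of V E S] by blast
  have "Bsets ((V - S) \<union> S) (?Eout \<union> induced_edges E S) T = Bsets ((V - S) \<union> VH) (?Eout \<union> EH) T"
  proof (rule Bsets_replace_subgraph)
    show "\<forall>e\<in>?Eout. e \<subseteq> (V - S) \<union> X"
      using graph_edge_leaving_subset[OF assms(1)] assms(4) by blast
    show "T \<subseteq> (V - S) \<union> X"
      using assms(3,4) by blast
    show "\<forall>e\<in>induced_edges E S. e \<subseteq> S"
      unfolding induced_edges_def by blast
    show "\<forall>e\<in>EH. e \<subseteq> VH"
      using graph_edge_subset[OF assms(5)] by blast
  qed (use assms(6-8) \<open>X \<subseteq> S\<close> in auto)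
  then show ?thesis unfolding decomp .
qed

end
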